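(* Let $T$ be a tournament and let $\sigma$ be any ordering of $V(T)$ in which the vertices appear in non-decreasing order of in-degree. Then $\Delta_\sigma(T)\le 3\,\Delta(T)$. Moreover, the factor $3$ is tight: there exist a tournament $T$ with $\Delta(T)\ge 1$ and an ordering $\sigma$ of $V(T)$ in non-decreasing order of in-degree with $\Delta_\sigma(T)=3\,\Delta(T)$.
   Context: A tournament is a digraph with exactly one arc between each pair of distinct vertices; $d^-(v)$ is the in-degree of $v$. For an ordering $\sigma=\langle v_1,\dots,v_n\rangle$ of $V(T)$, an arc $(v_i,v_j)$ is backward if $j<i$. $d_\sigma(v)$ is the number of backward arcs incident to $v$, $\Delta_\sigma(T)=\max_v d_\sigma(v)$, and the degreewidth is $\Delta(T)=\min_\sigma\Delta_\sigma(T)$ over all orderings $\sigma$. *)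

theory Defs
  imports Main
begin

definition tournament :: "'a set \<Rightarrow> ('a \<Rightarrow> 'a \<Rightarrow> bool) \<Rightarrow> bool" where
  "tournament V A \<longleftrightarrow> finite V
     \<and> (\<forall>u v. A u v \<longrightarrow> u \<in> V \<and> v \<in> V)
     \<and> (\<forall>v. \<not> A v v)
     \<and> (\<forall>u\<in>V. \<forall>v\<in>V. u \<noteq> v \<longrightarrow> (A u v \<longleftrightarrow> \<not> A v u))"

definition indeg :: "'a set \<Rightarrow> ('a \<Rightarrow> 'a \<Rightarrow> bool) \<Rightarrow> 'a \<Rightarrow> nat" where
  "indeg V A v = card {u \<in> V. A u v}"

definition is_ordering :: "'a set \<Rightarrow> 'a list \<Rightarrow> bool" where
  "is_ordering V \<sigma> \<longleftrightarrow> distinct \<sigma> \<and> set \<sigma> = V"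

definition pos :: "'a list \<Rightarrow> 'a \<Rightarrow> nat" where
  "pos \<sigma> v = (THE i. i < length \<sigma> \<and> \<sigma> ! i = v)"

definition backward :: "('a \<Rightarrow> 'a \<Rightarrow> bool) \<Rightarrow> 'a list \<Rightarrow> 'a \<Rightarrow> 'a \<Rightarrow> bool" where
  "backward A \<sigma> u v \<longleftrightarrow> A u v \<and> pos \<sigma> v < pos \<sigma> u"

definition d_sigma :: "'a set \<Rightarrow> ('a \<Rightarrow> 'a \<Rightarrow> bool) \<Rightarrow> 'a list \<Rightarrow> 'a \<Rightarrow> nat" where
  "d_sigma V A \<sigma> v = card {u \<in> V. backward A \<sigma> v u \<or> backward A \<sigma> u v}"

definition Delta_sigma :: "'a set \<Rightarrow> ('a \<Rightarrow> 'a \<Rightarrow> bool) \<Rightarrow> 'a list \<Rightarrow> nat" where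
  "Delta_sigma V A \<sigma> = Max (insert 0 (d_sigma V A \<sigma> ` V))"

definition degreewidth :: "'a set \<Rightarrow> ('a \<Rightarrow> 'a \<Rightarrow> bool) \<Rightarrow> nat" where
  "degreewidth V A = Min {Delta_sigma V A \<sigma> | \<sigma>. is_ordering V \<sigma>}"

definition indeg_sorted :: "'a set \<Rightarrow> ('a \<Rightarrow> 'a \<Rightarrow> bool) \<Rightarrow> 'a list \<Rightarrow> bool" where
  "indeg_sorted V A \<sigma> \<longleftrightarrow>
     (\<forall>i j. i < j \<and> j < length \<sigma> \<longrightarrow> indeg V A (\<sigma> ! i) \<le> indeg V A (\<sigma> ! j))"

end

theory Submission
  imports Defs
begin

(* Fix an optimal ordering t with \<Delta>_t(T) = k. Counting the vertices before v in t shows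
   d^-(v) + b^+_t(v) = pos_t(v) + b^-_t(v), where b^+_t(v) and b^-_t(v) count the backward arcs
   leaving and entering v; hence the position of every vertex in t differs from its in-degree
   by at most k. A backward arc at v in an in-degree sorted ordering s is either backward in t
   (at most k of them), or it joins v to a vertex u whose in-degree is comparable to that of v,
   which confines pos_t(u) to an interval of length k + b^-_t(v) - b^+_t(v) after v, resp.
   k + b^+_t(v) - b^-_t(v) before v. Altogether d_s(v) \<le> k + 2k.
   For tightness, reverse the arcs 03 and 14 of the transitive tournament on 0, ..., 4: the
   triangle 0 \<rightarrow> 1 \<rightarrow> 3 \<rightarrow> 0 forces degreewidth 1, which the natural order attains, whereas the
   in-degree order 0, 2, 3, 1, 4 leaves vertex 1 with three backward arcs. *)

lemma pos_nth: "distinct s \<Longrightarrow> i < length s \<Longrightarrow> pos s (s ! i) = i"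
  unfolding pos_def by (rule the_equality) (auto simp: nth_eq_iff_index_eq)

lemma pos_less_length: "distinct s \<Longrightarrow> v \<in> set s \<Longrightarrow> pos s v < length s"
  by (metis in_set_conv_nth pos_nth)

lemma nth_pos: "distinct s \<Longrightarrow> v \<in> set s \<Longrightarrow> s ! pos s v = v"
  by (metis in_set_conv_nth pos_nth)

lemma inj_on_pos: "distinct s \<Longrightarrow> inj_on (pos s) (set s)"
  by (metis inj_onI nth_pos)

lemma pos_Cons:
  assumes "distinct (x # xs)" "v \<in> set (x # xs)"
  shows "pos (x # xs) v = (if v = x then 0 else Suc (pos xs v))"
proof (cases "v = x")
  case True
  then show ?thesis using pos_nth[OF assms(1), of 0] by simp
next
  case False
  then have "v \<in> set xs" "distinct xs" using assms by auto
  then have "(x # xs) ! Suc (pos xs v) = v" "Suc (pos xs v) < length (x # xs)"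
    by (simp_all add: nth_pos pos_less_length)
  then show ?thesis using pos_nth[OF assms(1)] False by metis
qed

lemma card_pos_less:
  assumes "distinct s" "v \<in> set s"
  shows "card {u \<in> set s. pos s u < pos s v} = pos s v"
proof -
  have "{u \<in> set s. pos s u < pos s v} = (!) s ` {..<pos s v}"
    using assms pos_less_length[OF assms] by (force simp: nth_pos pos_nth)
  moreover have "inj_on ((!) s) {..<pos s v}"
    using assms pos_less_length[OF assms] by (auto simp: inj_on_def nth_eq_iff_index_eq)
  ultimately show ?thesis by (simp add: card_image)
qed

lemma tournament_finite: "tournament V A \<Longrightarrow> finite V"
  unfolding tournament_def by blast

lemma tournament_arc_in: "tournament V A \<Longrightarrow> A u v \<Longrightarrow> u \<in> V \<and> v \<in> V"
  unfolding tournament_def by blast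

lemma tournament_irrefl: "tournament V A \<Longrightarrow> \<not> A v v"
  unfolding tournament_def by blast

lemma tournament_total:
  "tournament V A \<Longrightarrow> u \<in> V \<Longrightarrow> v \<in> V \<Longrightarrow> u \<noteq> v \<Longrightarrow> A u v \<or> A v u"
  unfolding tournament_def by blast

lemma tournament_asym:
  assumes "tournament V A" "A u v"
  shows "\<not> A v u"
proof -
  have "u \<in> V" "v \<in> V" "u \<noteq> v" using assms unfolding tournament_def by blast+
  then show ?thesis using assms unfolding tournament_def by blast
qed

lemma indeg_le_of_sorted:
  assumes "indeg_sorted V A s" "distinct s" "u \<in> set s" "v \<in> set s" "pos s u < pos s v"
  shows "indeg V A u \<le> indeg V A v"
  using assms pos_less_length[of s v] nth_pos[of s u] nth_pos[of s v]
  unfolding indeg_sorted_def by metis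

lemma indeg_sorted_iff_sorted: "indeg_sorted V A s \<longleftrightarrow> sorted (map (indeg V A) s)"
  unfolding indeg_sorted_def sorted_iff_nth_mono_less by auto

definition back_out_deg :: "'a set \<Rightarrow> ('a \<Rightarrow> 'a \<Rightarrow> bool) \<Rightarrow> 'a list \<Rightarrow> 'a \<Rightarrow> nat" where
  "back_out_deg V A \<sigma> v = card {u \<in> V. backward A \<sigma> v u}"

definition back_in_deg :: "'a set \<Rightarrow> ('a \<Rightarrow> 'a \<Rightarrow> bool) \<Rightarrow> 'a list \<Rightarrow> 'a \<Rightarrow> nat" where
  "back_in_deg V A \<sigma> v = card {u \<in> V. backward A \<sigma> u v}"

lemma d_sigma_eq_back_out_deg_plus_back_in_deg:
  "finite V \<Longrightarrow> d_sigma V A \<sigma> v = back_out_deg V A \<sigma> v + back_in_deg V A \<sigma> v"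
  unfolding d_sigma_def back_out_deg_def back_in_deg_def
  by (subst card_Un_disjoint[symmetric]) (auto simp: backward_def intro: arg_cong[where f = card])

lemma d_sigma_le_Delta_sigma: "finite V \<Longrightarrow> v \<in> V \<Longrightarrow> d_sigma V A \<sigma> v \<le> Delta_sigma V A \<sigma>"
  unfolding Delta_sigma_def by (intro Max_ge) auto

lemma Delta_sigma_pos_of_backward:
  assumes "finite V" "u \<in> V" "v \<in> V" "backward A \<sigma> u v"
  shows "1 \<le> Delta_sigma V A \<sigma>"
proof -
  have "0 < d_sigma V A \<sigma> u"
    unfolding d_sigma_def using assms by (subst card_gt_0_iff) auto
  then show ?thesis using d_sigma_le_Delta_sigma[OF assms(1,2), of A \<sigma>] by linarith
qed

lemma Delta_sigma_le_card: "finite V \<Longrightarrow> Delta_sigma V A \<sigma> \<le> card V"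
proof -
  assume fin: "finite V"
  then have "d_sigma V A \<sigma> v \<le> card V" for v
    unfolding d_sigma_def by (intro card_mono) auto
  with fin show ?thesis unfolding Delta_sigma_def by simp
qed

lemma finite_Delta_sigma_values: "finite V \<Longrightarrow> finite {Delta_sigma V A \<sigma> | \<sigma>. is_ordering V \<sigma>}"
  by (rule finite_subset[of _ "{..card V}"]) (auto simp: Delta_sigma_le_card)

lemma degreewidth_le_Delta_sigma:
  "finite V \<Longrightarrow> is_ordering V \<sigma> \<Longrightarrow> degreewidth V A \<le> Delta_sigma V A \<sigma>"
  unfolding degreewidth_def by (intro Min_le finite_Delta_sigma_values) auto

lemma degreewidth_attained:
  assumes "finite V"
  obtains \<sigma> where "is_ordering V \<sigma>" "Delta_sigma V A \<sigma> = degreewidth V A"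
proof -
  obtain xs where "is_ordering V xs"
    using finite_distinct_list[OF assms] unfolding is_ordering_def by blast
  then have "degreewidth V A \<in> {Delta_sigma V A \<sigma> | \<sigma>. is_ordering V \<sigma>}"
    unfolding degreewidth_def by (intro Min_in finite_Delta_sigma_values assms) auto
  then show ?thesis using that by auto
qed

lemma indeg_plus_back_out_deg:
  assumes T: "tournament V A" and t: "is_ordering V t" and v: "v \<in> V"
  shows "indeg V A v + back_out_deg V A t v = pos t v + back_in_deg V A t v"
proof -
  have fin: "finite V" using tournament_finite[OF T] .
  have dt: "distinct t" "set t = V" using t unfolding is_ordering_def by auto
  define E where "E = {u \<in> V. A u v \<and> pos t u < pos t v}"
  have pos_ne: "pos t u \<noteq> pos t v" if "u \<in> V" "A u v" for u
    using that inj_on_pos[OF dt(1)] tournament_irrefl[OF T] dt(2) v by (metis inj_on_contraD)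
  have "{u \<in> V. A u v} = E \<union> {u \<in> V. backward A t u v}"
    unfolding E_def backward_def using pos_ne by (auto simp: nat_neq_iff)
  then have in_split: "indeg V A v = card E + back_in_deg V A t v"
    unfolding indeg_def back_in_deg_def E_def using fin
    by (simp add: card_Un_disjoint disjoint_iff backward_def)
  have "{u \<in> V. pos t u < pos t v} = E \<union> {u \<in> V. backward A t v u}"
    unfolding E_def backward_def using tournament_total[OF T _ v] by auto
  moreover have "card {u \<in> V. pos t u < pos t v} = pos t v"
    using card_pos_less[OF dt(1)] dt(2) v by simp
  moreover have "E \<inter> {u \<in> V. backward A t v u} = {}"
    unfolding E_def backward_def using tournament_asym[OF T] by auto
  ultimately have "pos t v = card E + back_out_deg V A t v"
    unfolding back_out_deg_def using fin by (simp add: card_Un_disjoint E_def)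
  with in_split show ?thesis by simp
qed

lemma pos_le_indeg_plus_d_sigma:
  assumes "tournament V A" "is_ordering V t" "v \<in> V"
  shows "pos t v \<le> indeg V A v + d_sigma V A t v"
  using indeg_plus_back_out_deg[OF assms]
    d_sigma_eq_back_out_deg_plus_back_in_deg[OF tournament_finite[OF assms(1)], of A t v]
  by linarith

lemma indeg_le_pos_plus_d_sigma:
  assumes "tournament V A" "is_ordering V t" "v \<in> V"
  shows "indeg V A v \<le> pos t v + d_sigma V A t v"
  using indeg_plus_back_out_deg[OF assms]
    d_sigma_eq_back_out_deg_plus_back_in_deg[OF tournament_finite[OF assms(1)], of A t v]
  by linarith

lemma card_sorted_back_out_forward_le:
  assumes T: "tournament V A" and s: "is_ordering V s" "indeg_sorted V A s"
    and t: "is_ordering V t" and v: "v \<in> V"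
  shows "card {u \<in> V. backward A s v u \<and> pos t v < pos t u} + back_out_deg V A t v
           \<le> Delta_sigma V A t + back_in_deg V A t v"
proof -
  let ?X = "{u \<in> V. backward A s v u \<and> pos t v < pos t u}"
  let ?k = "Delta_sigma V A t"
  have fin: "finite V" using tournament_finite[OF T] .
  have dt: "distinct t" "set t = V" using t unfolding is_ordering_def by auto
  have d_le: "d_sigma V A t u \<le> ?k" if "u \<in> V" for u
    using d_sigma_le_Delta_sigma[OF fin that] .
  have out_le: "back_out_deg V A t v \<le> ?k"
    using d_le[OF v] d_sigma_eq_back_out_deg_plus_back_in_deg[OF fin, of A t v] by linarith
  have "pos t u \<in> {pos t v<..pos t v + back_in_deg V A t v + ?k - back_out_deg V A t v}"
    if u: "u \<in> ?X" for u
  proof -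
    from u have "u \<in> V" "pos s u < pos s v" "pos t v < pos t u" unfolding backward_def by auto
    then have "indeg V A u \<le> indeg V A v"
      using indeg_le_of_sorted[OF s(2)] s(1) v unfolding is_ordering_def by blast
    moreover have "pos t u \<le> indeg V A u + ?k"
      using pos_le_indeg_plus_d_sigma[OF T t \<open>u \<in> V\<close>] d_le[OF \<open>u \<in> V\<close>] by linarith
    ultimately show ?thesis
      using \<open>pos t v < pos t u\<close> indeg_plus_back_out_deg[OF T t v] out_le by simp
  qed
  then have "card ?X \<le> card {pos t v<..pos t v + back_in_deg V A t v + ?k - back_out_deg V A t v}"
    using dt(2) by (intro card_inj_on_le[OF inj_on_subset[OF inj_on_pos[OF dt(1)]]]) auto
  then show ?thesis using out_le by simp
qed

lemma card_sorted_back_in_forward_le: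
  assumes T: "tournament V A" and s: "is_ordering V s" "indeg_sorted V A s"
    and t: "is_ordering V t" and v: "v \<in> V"
  shows "card {u \<in> V. backward A s u v \<and> pos t u < pos t v} + back_in_deg V A t v
           \<le> Delta_sigma V A t + back_out_deg V A t v"
proof -
  let ?Y = "{u \<in> V. backward A s u v \<and> pos t u < pos t v}"
  let ?k = "Delta_sigma V A t"
  have fin: "finite V" using tournament_finite[OF T] .
  have dt: "distinct t" "set t = V" using t unfolding is_ordering_def by auto
  have d_le: "d_sigma V A t u \<le> ?k" if "u \<in> V" for u
    using d_sigma_le_Delta_sigma[OF fin that] .
  have in_le: "back_in_deg V A t v \<le> ?k"
    using d_le[OF v] d_sigma_eq_back_out_deg_plus_back_in_deg[OF fin, of A t v] by linarith
  have "pos t u \<in> {pos t v + back_in_deg V A t v - (back_out_deg V A t v + ?k)..<pos t v}"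
    if u: "u \<in> ?Y" for u
  proof -
    from u have "u \<in> V" "pos s v < pos s u" "pos t u < pos t v" unfolding backward_def by auto
    then have "indeg V A v \<le> indeg V A u"
      using indeg_le_of_sorted[OF s(2)] s(1) v unfolding is_ordering_def by blast
    moreover have "indeg V A u \<le> pos t u + ?k"
      using indeg_le_pos_plus_d_sigma[OF T t \<open>u \<in> V\<close>] d_le[OF \<open>u \<in> V\<close>] by linarith
    ultimately show ?thesis using \<open>pos t u < pos t v\<close> indeg_plus_back_out_deg[OF T t v] by simp
  qed
  then have "card ?Y \<le> card {pos t v + back_in_deg V A t v - (back_out_deg V A t v + ?k)..<pos t v}"
    using dt(2) by (intro card_inj_on_le[OF inj_on_subset[OF inj_on_pos[OF dt(1)]]]) auto
  then show ?thesis using in_le by simp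
qed

lemma d_sigma_sorted_le:
  assumes T: "tournament V A" and s: "is_ordering V s" "indeg_sorted V A s"
    and t: "is_ordering V t" and v: "v \<in> V"
  shows "d_sigma V A s v \<le> d_sigma V A t v + 2 * Delta_sigma V A t"
proof -
  let ?B = "{u \<in> V. backward A t v u \<or> backward A t u v}"
  let ?X = "{u \<in> V. backward A s v u \<and> pos t v < pos t u}"
  let ?Y = "{u \<in> V. backward A s u v \<and> pos t u < pos t v}"
  have fin: "finite V" using tournament_finite[OF T] .
  have dt: "distinct t" "set t = V" using t unfolding is_ordering_def by auto
  have "{u \<in> V. backward A s v u \<or> backward A s u v} \<subseteq> ?B \<union> ?X \<union> ?Y"
  proof
    fix u assume u: "u \<in> {u \<in> V. backward A s v u \<or> backward A s u v}"
    then have "u \<in> V" "u \<noteq> v" using tournament_irrefl[OF T] unfolding backward_def by blast+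
    then have "pos t u \<noteq> pos t v" using inj_onD[OF inj_on_pos[OF dt(1)]] v dt(2) by blast
    then show "u \<in> ?B \<union> ?X \<union> ?Y"
      using u unfolding backward_def by (cases "pos t u < pos t v") auto
  qed
  then have "d_sigma V A s v \<le> card (?B \<union> ?X \<union> ?Y)"
    unfolding d_sigma_def using fin by (intro card_mono) auto
  also have "\<dots> \<le> card ?B + card ?X + card ?Y"
    using card_Un_le[of "?B \<union> ?X" ?Y] card_Un_le[of ?B ?X] by linarith
  also have "\<dots> \<le> d_sigma V A t v + 2 * Delta_sigma V A t"
    using card_sorted_back_out_forward_le[OF T s t v] card_sorted_back_in_forward_le[OF T s t v]
    unfolding d_sigma_def by linarith
  finally show ?thesis .
qed

lemma Delta_sigma_sorted_le:
  assumes T: "tournament V A" and s: "is_ordering V s" "indeg_sorted V A s"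
    and t: "is_ordering V t"
  shows "Delta_sigma V A s \<le> 3 * Delta_sigma V A t"
proof -
  have fin: "finite V" using tournament_finite[OF T] .
  have "d_sigma V A s v \<le> 3 * Delta_sigma V A t" if v: "v \<in> V" for v
    using d_sigma_sorted_le[OF T s t v] d_sigma_le_Delta_sigma[OF fin v, of A t] by linarith
  with fin show ?thesis unfolding Delta_sigma_def by simp
qed

theorem Delta_sigma_sorted_le_degreewidth:
  assumes T: "tournament V A" and s: "is_ordering V s" "indeg_sorted V A s"
  shows "Delta_sigma V A s \<le> 3 * degreewidth V A"
proof -
  obtain t where "is_ordering V t" "Delta_sigma V A t = degreewidth V A"
    using degreewidth_attained[OF tournament_finite[OF T]] .
  with Delta_sigma_sorted_le[OF T s] show ?thesis by metis
qed

lemma degreewidth_pos_of_triangle: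
  assumes T: "tournament V A" and arcs: "A a b" "A b c" "A c a"
  shows "1 \<le> degreewidth V A"
proof -
  have fin: "finite V" using tournament_finite[OF T] .
  obtain \<sigma> where \<sigma>: "is_ordering V \<sigma>" "Delta_sigma V A \<sigma> = degreewidth V A"
    using degreewidth_attained[OF fin] .
  have in_V: "a \<in> V" "b \<in> V" "c \<in> V" using arcs tournament_arc_in[OF T] by blast+
  have "\<exists>x\<in>V. \<exists>y\<in>V. backward A \<sigma> x y"
  proof (rule ccontr)
    assume none: "\<not> (\<exists>x\<in>V. \<exists>y\<in>V. backward A \<sigma> x y)"
    have forward: "pos \<sigma> x \<le> pos \<sigma> y" if "A x y" for x y
    proof -
      have "\<not> backward A \<sigma> x y" using none tournament_arc_in[OF T that] by blast
      then show ?thesis using that unfolding backward_def by simp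
    qed
    have "pos \<sigma> a = pos \<sigma> b"
      using forward[OF arcs(1)] forward[OF arcs(2)] forward[OF arcs(3)] by simp
    moreover have "distinct \<sigma>" "set \<sigma> = V" using \<sigma>(1) unfolding is_ordering_def by auto
    ultimately have "a = b" using inj_onD[OF inj_on_pos] in_V by metis
    then show False using arcs(1) tournament_irrefl[OF T] by simp
  qed
  then obtain x y where "x \<in> V" "y \<in> V" "backward A \<sigma> x y" by blast
  then show ?thesis using Delta_sigma_pos_of_backward[OF fin] \<sigma>(2) by metis
qed

lemma card_filter_atLeast0LessThan: "card {u \<in> {0..<n}. P u} = length (filter P [0..<n])"
  by (metis distinct_card distinct_filter distinct_upt set_filter set_upt)

definition example_arc :: "nat \<Rightarrow> nat \<Rightarrow> bool" where
  "example_arc u v \<longleftrightarrow>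
     (u, v) \<in> {(0,1), (0,2), (0,4), (1,2), (1,3), (2,3), (2,4), (3,0), (3,4), (4,1)}"

lemma example_tournament: "tournament {0..<5} example_arc"
proof -
  have "{0..<5::nat} = {0, 1, 2, 3, 4}" by auto
  then show ?thesis unfolding tournament_def example_arc_def by simp presburger
qed

lemma example_indeg_sorted: "indeg_sorted {0..<5} example_arc [0, 2, 3, 1, 4]"
  unfolding indeg_sorted_iff_sorted indeg_def card_filter_atLeast0LessThan
  by (simp add: example_arc_def upt_rec)

lemma example_Delta_sigma_natural: "Delta_sigma {0..<5} example_arc [0..<5] = 1"
  unfolding Delta_sigma_def d_sigma_def backward_def card_filter_atLeast0LessThan
  by (simp add: pos_Cons example_arc_def upt_rec atLeast0LessThan lessThan_Suc numeral_eq_Suc)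

lemma example_Delta_sigma_sorted: "Delta_sigma {0..<5} example_arc [0, 2, 3, 1, 4] = 3"
  unfolding Delta_sigma_def d_sigma_def backward_def card_filter_atLeast0LessThan
  by (simp add: pos_Cons example_arc_def upt_rec atLeast0LessThan lessThan_Suc numeral_eq_Suc)

lemma example_degreewidth: "degreewidth {0..<5} example_arc = 1"
proof -
  have "1 \<le> degreewidth {0..<5} example_arc"
    by (rule degreewidth_pos_of_triangle[OF example_tournament, of 0 1 3]) (simp_all add: example_arc_def)
  moreover have "degreewidth {0..<5} example_arc \<le> 1"
    using degreewidth_le_Delta_sigma[of "{0..<5}" "[0..<5]" example_arc] example_Delta_sigma_natural
    by (simp add: is_ordering_def)
  ultimately show ?thesis by simp
qed

theorem mainTheorem3:
  shows "(\<forall>(V :: 'a set) A \<sigma>. tournament V A \<and> is_ordering V \<sigma> \<and> indeg_sorted V A \<sigma>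
            \<longrightarrow> Delta_sigma V A \<sigma> \<le> 3 * degreewidth V A)
       \<and> (\<exists>(V :: nat set) A \<sigma>. tournament V A \<and> degreewidth V A \<ge> 1
            \<and> is_ordering V \<sigma> \<and> indeg_sorted V A \<sigma>
            \<and> Delta_sigma V A \<sigma> = 3 * degreewidth V A)"
proof (intro conjI allI impI)
  show "Delta_sigma V A \<sigma> \<le> 3 * degreewidth V A"
    if "tournament V A \<and> is_ordering V \<sigma> \<and> indeg_sorted V A \<sigma>" for V :: "'a set" and A \<sigma>
    using Delta_sigma_sorted_le_degreewidth that by blast
  have "is_ordering {0..<5} [0, 2, 3, 1, 4::nat]"
    unfolding is_ordering_def by auto
  with example_tournament example_degreewidth example_indeg_sorted example_Delta_sigma_sorted
  show "\<exists>(V :: nat set) A \<sigma>. tournament V A \<and> degreewidth V A \<ge> 1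
            \<and> is_ordering V \<sigma> \<and> indeg_sorted V A \<sigma>
            \<and> Delta_sigma V A \<sigma> = 3 * degreewidth V A"
    by (intro exI[of _ "{0..<5}"] exI[of _ example_arc] exI[of _ "[0, 2, 3, 1, 4]"]) simp
qed

end
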